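(* Let $\{(G_n,\Psi_n,\varphi^L_n,\varphi^U_n)\}_{n\ge0}$ be an $\mathcal{F}$-system (with $\varphi^U_n>0$) satisfying Condition $\Gamma$, with induced Cantor system $(X,H_X)$ and limit function $\varphi^U$. Define $s:X\to\mathbb{R}$ by $s(x)=\lim_{n\to\infty}s_n(x(n),H_X(x)(n))$. Then $s$ is continuous, $s>0$, and whenever $\varphi^U(x)\ne0$ we have $s(x)=\varphi^U(H_X(x))/\varphi^U(x)$.
   Context: An $\mathcal{F}$-system consists of: finite directed graphs $G_n$ ($n\ge0$), each vertex having at least one outgoing and one incoming edge; surjective maps $\Psi_n:G_{n+1}\to G_n$ sending edges to edges; such that (i) for each $n$ and $v\in G_n$ there are $m>n$ and distinct $v',v''\in G_{m+1}$ with $\Psi_n\circ\cdots\circ\Psi_m(v')=\Psi_n\circ\cdots\circ\Psi_m(v'')=v$; (ii) for every $m$ there is $n>m$ such that for every $g\in G_n$ the set $\{\Psi_m\circ\cdots\circ\Psi_{n-1}(g'):\overrightarrow{gg'}\in G_n\}$ has exactly one element; and maps $\varphi^L_n,\varphi^U_n:G_n\to[0,1]$ with $\varphi^L_n\le\varphi^U_n$, $\varphi^U_{n+1}(v')\le\varphi^U_n(\Psi_n(v'))$, $\varphi^L_{n+1}(v')\ge\varphi^L_n(\Psi_n(v'))$, and such that for every $g\in G_n$ there is $g'\in G_{n+1}$ with $\Psi_n(g')=g$, $\varphi^L_{n+1}(g')=\varphi^L_n(g)$, $\varphi^U_{n+1}(g')=\varphi^U_n(g)$. $X=\{x\in\prod_n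 G_n: x(n)=\Psi_n(x(n+1))\ \forall n\}$ (a Cantor space) and $H_X:X\to X$ is the continuous surjection whose graph is $\{(x,y)\in X^2:\overrightarrow{x(n)y(n)}\in G_n\ \forall n\}$. $\varphi^U(x)=\lim_n\varphi^U_n(x(n))$. For $u,v\in G_n$, $s_n(u,v)=\varphi^U_n(v)/\varphi^U_n(u)$. For an edge $\overrightarrow{uv}\in G_n$, $\Gamma_n(\overrightarrow{uv})=\max\{|s_n(v,u)-s_{n+1}(v',u')|,|s_n(u,v)-s_{n+1}(u',v')| : \overrightarrow{u'v'}\in G_{n+1},\Psi_n(u')=u,\Psi_n(v')=v\}$, $\Gamma_n=\max_{\overrightarrow{uv}}\Gamma_n(\overrightarrow{uv})$; Condition $\Gamma$ means $\sum_n\Gamma_n<1$. *)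

theory Defs
  imports "HOL-Analysis.Analysis"
begin

fun proj :: "(nat \<Rightarrow> 'v \<Rightarrow> 'v) \<Rightarrow> nat \<Rightarrow> nat \<Rightarrow> 'v \<Rightarrow> 'v" where
  "proj Psi m 0 v = v"
| "proj Psi m (Suc k) v = proj Psi m k (Psi (m + k) v)"

definition F_system ::
  "(nat \<Rightarrow> 'v set) \<Rightarrow> (nat \<Rightarrow> ('v \<times> 'v) set) \<Rightarrow> (nat \<Rightarrow> 'v \<Rightarrow> 'v)
   \<Rightarrow> (nat \<Rightarrow> 'v \<Rightarrow> real) \<Rightarrow> (nat \<Rightarrow> 'v \<Rightarrow> real) \<Rightarrow> bool" where
  "F_system V E Psi phiL phiU \<longleftrightarrow>
     (\<forall>n. finite (V n) \<and> E n \<subseteq> V n \<times> V n) \<and>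
     (\<forall>n. \<forall>v\<in>V n. (\<exists>w. (v, w) \<in> E n) \<and> (\<exists>w. (w, v) \<in> E n)) \<and>
     (\<forall>n. Psi n ` V (Suc n) = V n) \<and>
     (\<forall>n u v. (u, v) \<in> E (Suc n) \<longrightarrow> (Psi n u, Psi n v) \<in> E n) \<and>
     \<comment> \<open>condition (i)\<close>
     (\<forall>n. \<forall>v\<in>V n. \<exists>m>n. \<exists>v'\<in>V (Suc m). \<exists>v''\<in>V (Suc m). v' \<noteq> v'' \<and>
          proj Psi n (Suc m - n) v' = v \<and> proj Psi n (Suc m - n) v'' = v) \<and>
     \<comment> \<open>condition (ii)\<close>
     (\<forall>m. \<exists>n>m. \<forall>g\<in>V n. card {proj Psi m (n - m) g' | g'. (g, g') \<in> E n} = 1) \<and>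
     \<comment> \<open>conditions on phiL, phiU\<close>
     (\<forall>n. \<forall>v\<in>V n. 0 \<le> phiL n v \<and> phiL n v \<le> phiU n v \<and> phiU n v \<le> 1) \<and>
     (\<forall>n. \<forall>v'\<in>V (Suc n). phiU (Suc n) v' \<le> phiU n (Psi n v') \<and>
                         phiL (Suc n) v' \<ge> phiL n (Psi n v')) \<and>
     (\<forall>n. \<forall>g\<in>V n. \<exists>g'\<in>V (Suc n). Psi n g' = g \<and>
          phiL (Suc n) g' = phiL n g \<and> phiU (Suc n) g' = phiU n g)"

definition FX :: "(nat \<Rightarrow> 'v set) \<Rightarrow> (nat \<Rightarrow> 'v \<Rightarrow> 'v) \<Rightarrow> (nat \<Rightarrow> 'v) set" where
  "FX V Psi = {x. \<forall>n. x n \<in> V n \<and> x n = Psi n (x (Suc n))}"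

definition FX_top :: "(nat \<Rightarrow> 'v set) \<Rightarrow> (nat \<Rightarrow> 'v \<Rightarrow> 'v) \<Rightarrow> (nat \<Rightarrow> 'v) topology" where
  "FX_top V Psi = subtopology (product_topology (\<lambda>n. discrete_topology (V n)) UNIV) (FX V Psi)"

definition HX :: "(nat \<Rightarrow> 'v set) \<Rightarrow> (nat \<Rightarrow> ('v \<times> 'v) set) \<Rightarrow> (nat \<Rightarrow> 'v \<Rightarrow> 'v)
   \<Rightarrow> (nat \<Rightarrow> 'v) \<Rightarrow> (nat \<Rightarrow> 'v)" where
  "HX V E Psi x = (THE y. y \<in> FX V Psi \<and> (\<forall>n. (x n, y n) \<in> E n))"

definition phiU_lim :: "(nat \<Rightarrow> 'v \<Rightarrow> real) \<Rightarrow> (nat \<Rightarrow> 'v) \<Rightarrow> real" where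
  "phiU_lim phiU x = lim (\<lambda>n. phiU n (x n))"

definition s_n :: "(nat \<Rightarrow> 'v \<Rightarrow> real) \<Rightarrow> nat \<Rightarrow> 'v \<Rightarrow> 'v \<Rightarrow> real" where
  "s_n phiU n u v = phiU n v / phiU n u"

text \<open>Gamma_n(uv) for an edge uv of G_n; the max over an empty set is read as 0
  (adding 0 does not change the max of absolute values otherwise).\<close>
definition Gamma_edge ::
  "(nat \<Rightarrow> ('v \<times> 'v) set) \<Rightarrow> (nat \<Rightarrow> 'v \<Rightarrow> 'v) \<Rightarrow> (nat \<Rightarrow> 'v \<Rightarrow> real) \<Rightarrow> nat \<Rightarrow> 'v \<Rightarrow> 'v \<Rightarrow> real" where
  "Gamma_edge E Psi phiU n u v = Max (insert 0
     ({\<bar>s_n phiU n v u - s_n phiU (Suc n) v' u'\<bar> | u' v'.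
         (u', v') \<in> E (Suc n) \<and> Psi n u' = u \<and> Psi n v' = v} \<union>
      {\<bar>s_n phiU n u v - s_n phiU (Suc n) u' v'\<bar> | u' v'.
         (u', v') \<in> E (Suc n) \<and> Psi n u' = u \<and> Psi n v' = v}))"

definition Gamma ::
  "(nat \<Rightarrow> ('v \<times> 'v) set) \<Rightarrow> (nat \<Rightarrow> 'v \<Rightarrow> 'v) \<Rightarrow> (nat \<Rightarrow> 'v \<Rightarrow> real) \<Rightarrow> nat \<Rightarrow> real" where
  "Gamma E Psi phiU n = Max (insert 0 {Gamma_edge E Psi phiU n u v | u v. (u, v) \<in> E n})"

definition Condition_Gamma ::
  "(nat \<Rightarrow> ('v \<times> 'v) set) \<Rightarrow> (nat \<Rightarrow> 'v \<Rightarrow> 'v) \<Rightarrow> (nat \<Rightarrow> 'v \<Rightarrow> real) \<Rightarrow> bool" where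
  "Condition_Gamma E Psi phiU \<longleftrightarrow> summable (Gamma E Psi phiU) \<and> suminf (Gamma E Psi phiU) < 1"

end

theory Submission
  imports Defs
begin

(* For x in X the pairs (x n, H_X x n) are edges of G_n, each lying over the previous one, so
   consecutive terms of s_n (x n) (H_X x n), and of their reciprocals, differ by at most Gamma n.
   Summability of Gamma thus gives uniform convergence on X to s, and s > 0 because the
   reciprocals converge too. By condition (ii), H_X x m is determined by x n for some n > m, so
   each term is locally constant, hence continuous, and so is the uniform limit s. Since phi^U_n
   decreases along x, where phi^U x is nonzero the limit of the quotients is the quotient of the
   limits. *)

lemma proj_add: "proj Psi m (a + b) w = proj Psi m a (proj Psi (m + a) b w)"
  by (induction b arbitrary: w) (simp_all add: add.assoc)

lemma proj_Suc_left: "proj Psi m (Suc k) w = Psi m (proj Psi (Suc m) k w)"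
  using proj_add[of Psi m 1 k w] by simp

lemma FX_D:
  assumes "x \<in> FX V Psi"
  shows FX_in_V: "x n \<in> V n" and FX_Psi: "Psi n (x (Suc n)) = x n"
proof -
  have "x n \<in> V n" and "x n = Psi n (x (Suc n))"
    using assms unfolding FX_def by blast+
  then show "x n \<in> V n" and "Psi n (x (Suc n)) = x n"
    by simp_all
qed

lemma proj_FX:
  assumes "x \<in> FX V Psi" and "m \<le> n"
  shows "proj Psi m (n - m) (x n) = x m"
proof -
  have "proj Psi m k (x (m + k)) = x m" for k
    by (induction k) (simp_all add: FX_Psi[OF assms(1)])
  from this[of "n - m"] show ?thesis using assms(2) by simp
qed

definition projected_successors ::
  "(nat \<Rightarrow> ('v \<times> 'v) set) \<Rightarrow> (nat \<Rightarrow> 'v \<Rightarrow> 'v) \<Rightarrow> nat \<Rightarrow> nat \<Rightarrow> 'v \<Rightarrow> 'v set" where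
  "projected_successors E Psi m n g = {proj Psi m (n - m) g' | g'. (g, g') \<in> E n}"

lemma coord_in_projected_successors:
  assumes "y \<in> FX V Psi" and "(g, y n) \<in> E n" and "m \<le> n"
  shows "y m \<in> projected_successors E Psi m n g"
proof -
  have "proj Psi m (n - m) (y n) \<in> projected_successors E Psi m n g"
    using assms(2) unfolding projected_successors_def by blast
  then show ?thesis
    using proj_FX[OF assms(1,3)] by simp
qed

lemma coord_eq_if_single_projected_successor:
  assumes "card (projected_successors E Psi m n g) = 1"
    and "y \<in> FX V Psi" "(g, y n) \<in> E n" and "y' \<in> FX V Psi" "(g, y' n) \<in> E n"
    and "m \<le> n"
  shows "y m = y' m"
proof -
  obtain c where "projected_successors E Psi m n g = {c}"
    using card_1_singletonE[OF assms(1)] by blast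
  then show ?thesis
    using coord_in_projected_successors[of y V Psi g n E m]
      coord_in_projected_successors[of y' V Psi g n E m] assms(2-6) by simp
qed

lemma finite_pair_image_set:
  assumes "finite S"
  shows "finite {f a b | a b. (a, b) \<in> S \<and> P a b}"
proof (rule finite_subset)
  show "{f a b | a b. (a, b) \<in> S \<and> P a b} \<subseteq> case_prod f ` S"
    by (auto intro: rev_image_eqI)
qed (use assms in simp)

lemma summable_increments_LIMSEQ:
  fixes a g :: "nat \<Rightarrow> real"
  assumes "summable g" and "\<And>n. \<bar>a (Suc n) - a n\<bar> \<le> g n"
  shows "a \<longlonglongrightarrow> lim a" and "\<bar>a n - lim a\<bar> \<le> (\<Sum>k. g (k + n))"
proof -
  define D where "D n = a (Suc n) - a n" for n
  have D_le: "norm (D n) \<le> g n" for n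
    using assms(2) unfolding D_def by simp
  have "summable D"
    by (rule summable_comparison_test[OF _ assms(1)]) (use D_le in blast)
  have a_eq: "a n = a 0 + (\<Sum>k<n. D k)" for n
    unfolding D_def by (simp add: sum_lessThan_telescope)
  have "(\<lambda>n. a 0 + (\<Sum>k<n. D k)) \<longlonglongrightarrow> a 0 + suminf D"
    by (intro tendsto_add tendsto_const summable_LIMSEQ \<open>summable D\<close>)
  then have a_tendsto: "a \<longlonglongrightarrow> a 0 + suminf D"
    by (simp only: a_eq[symmetric])
  then have lim_a: "lim a = a 0 + suminf D"
    by (rule limI)
  with a_tendsto show "a \<longlonglongrightarrow> lim a"
    by simp
  have tail_summable: "summable (\<lambda>k. norm (D (k + n)))"
    by (rule summable_comparison_test[OF _ summable_ignore_initial_segment[OF assms(1), of n]])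
      (use D_le in simp)
  have "a n - lim a = - (\<Sum>k. D (k + n))"
    using a_eq[of n] lim_a suminf_split_initial_segment[OF \<open>summable D\<close>, of n] by linarith
  then have "\<bar>a n - lim a\<bar> \<le> (\<Sum>k. norm (D (k + n)))"
    using summable_norm[OF tail_summable] by simp
  also have "\<dots> \<le> (\<Sum>k. g (k + n))"
    by (rule suminf_le[OF _ tail_summable summable_ignore_initial_segment[OF assms(1)]]) (rule D_le)
  finally show "\<bar>a n - lim a\<bar> \<le> (\<Sum>k. g (k + n))" .
qed

lemma pos_limit_if_inverse_convergent:
  fixes a :: "nat \<Rightarrow> real"
  assumes pos: "\<And>n. a n > 0" and "a \<longlonglongrightarrow> L" and "convergent (\<lambda>n. inverse (a n))"
  shows "L > 0"
proof -
  obtain B where "(\<lambda>n. inverse (a n)) \<longlonglongrightarrow> B"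
    using assms(3) by (auto simp: convergent_def)
  with assms(2) have "(\<lambda>n. a n * inverse (a n)) \<longlonglongrightarrow> L * B"
    by (rule tendsto_mult)
  moreover have "(\<lambda>n. a n * inverse (a n)) = (\<lambda>n. 1)"
    using pos by (simp add: less_le)
  ultimately have "1 = L * B"
    using LIMSEQ_unique[OF tendsto_const] by metis
  moreover have "L \<ge> 0"
    by (rule LIMSEQ_le_const[OF assms(2)]) (use pos less_imp_le in blast)
  ultimately show ?thesis
    by (cases "L = 0") simp_all
qed

lemma topspace_FX_top: "topspace (FX_top V Psi) = FX V Psi"
proof -
  have "FX V Psi \<subseteq> (\<Pi>\<^sub>E n\<in>UNIV. V n)"
    using FX_in_V by blast
  then show ?thesis unfolding FX_top_def by auto
qed

lemma openin_FX_top_cylinder: "openin (FX_top V Psi) {x \<in> FX V Psi. x n = c}"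
proof -
  have "continuous_map (FX_top V Psi) (discrete_topology (V n)) (\<lambda>x. x n)"
    unfolding FX_top_def
    by (intro continuous_map_from_subtopology continuous_map_product_projection) simp
  then have "openin (FX_top V Psi) {x \<in> topspace (FX_top V Psi). x n \<in> {c} \<inter> V n}"
    by (rule openin_continuous_map_preimage) simp
  also have "{x \<in> topspace (FX_top V Psi). x n \<in> {c} \<inter> V n} = {x \<in> FX V Psi. x n = c}"
    using FX_in_V by (auto simp: topspace_FX_top)
  finally show ?thesis .
qed

lemma continuous_map_FX_top_if_coord_determined:
  assumes "f ` FX V Psi \<subseteq> topspace Y"
    and "\<And>x x'. x \<in> FX V Psi \<Longrightarrow> x' \<in> FX V Psi \<Longrightarrow> x n = x' n \<Longrightarrow> f x = f x'"
  shows "continuous_map (FX_top V Psi) Y f"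
  unfolding continuous_map topspace_FX_top
proof (intro conjI allI impI)
  show "f ` FX V Psi \<subseteq> topspace Y"
    by (fact assms(1))
next
  fix U
  let ?S = "{x \<in> FX V Psi. f x \<in> U}"
  have "?S = (\<Union>x0\<in>?S. {x \<in> FX V Psi. x n = x0 n})"
  proof
    show "(\<Union>x0\<in>?S. {x \<in> FX V Psi. x n = x0 n}) \<subseteq> ?S"
    proof
      fix x assume "x \<in> (\<Union>x0\<in>?S. {x \<in> FX V Psi. x n = x0 n})"
      then obtain x0 where "x0 \<in> ?S" "x \<in> FX V Psi" "x n = x0 n"
        by blast
      then show "x \<in> ?S"
        using assms(2)[of x x0] by simp
    qed
  qed blast
  also have "openin (FX_top V Psi) \<dots>"
    by (intro openin_Union) (auto simp: openin_FX_top_cylinder)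
  finally show "openin (FX_top V Psi) ?S" .
qed

locale Fsystem =
  fixes V :: "nat \<Rightarrow> 'v set" and E :: "nat \<Rightarrow> ('v \<times> 'v) set"
    and Psi :: "nat \<Rightarrow> 'v \<Rightarrow> 'v" and phiL phiU :: "nat \<Rightarrow> 'v \<Rightarrow> real"
  assumes F_system: "F_system V E Psi phiL phiU"
begin

lemma finite_V: "finite (V n)"
  and E_subset: "E n \<subseteq> V n \<times> V n"
  and has_successor: "v \<in> V n \<Longrightarrow> \<exists>w. (v, w) \<in> E n"
  and Psi_edge: "(u, v) \<in> E (Suc n) \<Longrightarrow> (Psi n u, Psi n v) \<in> E n"
  and eventually_single_successor:
    "\<exists>n>m. \<forall>g\<in>V n. card (projected_successors E Psi m n g) = 1"
  and phiU_Psi: "v \<in> V (Suc n) \<Longrightarrow> phiU (Suc n) v \<le> phiU n (Psi n v)"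
  and phiL_bounds: "v \<in> V n \<Longrightarrow> 0 \<le> phiL n v \<and> phiL n v \<le> phiU n v"
  using F_system unfolding F_system_def projected_successors_def by blast+

lemma phiU_nonneg: "v \<in> V n \<Longrightarrow> 0 \<le> phiU n v"
  using phiL_bounds by fastforce

lemma finite_E: "finite (E n)"
  using finite_subset[OF E_subset] finite_V by blast

lemma proj_edge: "(u, w) \<in> E (m + k) \<Longrightarrow> (proj Psi m k u, proj Psi m k w) \<in> E m"
  by (induction k arbitrary: u w) (simp_all add: Psi_edge)

lemma s_n_diff_le_Gamma:
  assumes "(u, v) \<in> E n" and "(u', v') \<in> E (Suc n)" and "Psi n u' = u" "Psi n v' = v"
  shows "\<bar>s_n phiU n u v - s_n phiU (Suc n) u' v'\<bar> \<le> Gamma E Psi phiU n"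
    and "\<bar>s_n phiU n v u - s_n phiU (Suc n) v' u'\<bar> \<le> Gamma E Psi phiU n"
proof -
  have "Gamma_edge E Psi phiU n u v \<le> Gamma E Psi phiU n"
    unfolding Gamma_def
    using finite_pair_image_set[OF finite_E, of _ n "\<lambda>_ _. True"] assms(1) by (intro Max_ge) auto
  moreover have
    "\<bar>s_n phiU n u v - s_n phiU (Suc n) u' v'\<bar> \<le> Gamma_edge E Psi phiU n u v \<and>
     \<bar>s_n phiU n v u - s_n phiU (Suc n) v' u'\<bar> \<le> Gamma_edge E Psi phiU n u v"
    unfolding Gamma_edge_def using assms(2-4) finite_pair_image_set[OF finite_E]
    by (intro conjI Max_ge) auto
  ultimately show "\<bar>s_n phiU n u v - s_n phiU (Suc n) u' v'\<bar> \<le> Gamma E Psi phiU n"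
    and "\<bar>s_n phiU n v u - s_n phiU (Suc n) v' u'\<bar> \<le> Gamma E Psi phiU n"
    by linarith+
qed

lemma phiU_LIMSEQ:
  assumes x: "x \<in> FX V Psi"
  shows "(\<lambda>n. phiU n (x n)) \<longlonglongrightarrow> phiU_lim phiU x"
proof -
  have "decseq (\<lambda>n. phiU n (x n))"
  proof (rule decseq_SucI)
    fix n
    show "phiU (Suc n) (x (Suc n)) \<le> phiU n (x n)"
      using phiU_Psi[OF FX_in_V[OF x, of "Suc n"]] by (simp add: FX_Psi[OF x])
  qed
  then obtain L where "(\<lambda>n. phiU n (x n)) \<longlonglongrightarrow> L"
    using decseq_convergent phiU_nonneg[OF FX_in_V[OF x]] by blast
  then show ?thesis
    unfolding phiU_lim_def by (simp add: limI)
qed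

lemma proj_successor_eq_the_elem:
  assumes x: "x \<in> FX V Psi" and single: "card (projected_successors E Psi m n (x n)) = 1"
    and "m \<le> n" "n \<le> k" and "(x k, w) \<in> E k"
  shows "proj Psi m (k - m) w = the_elem (projected_successors E Psi m n (x n))"
proof -
  let ?w = "proj Psi n (k - n) w"
  have "(x n, ?w) \<in> E n"
    using proj_edge[of "x k" w n "k - n"] proj_FX[OF x \<open>n \<le> k\<close>] assms(4,5) by simp
  then have "proj Psi m (n - m) ?w \<in> projected_successors E Psi m n (x n)"
    unfolding projected_successors_def by blast
  moreover have "proj Psi m (n - m) ?w = proj Psi m (k - m) w"
    using proj_add[of Psi m "n - m" "k - n" w] assms(3,4) by simp
  moreover obtain c where "projected_successors E Psi m n (x n) = {c}"
    using card_1_singletonE[OF single] by blast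
  ultimately show ?thesis
    by simp
qed

lemma HX_exists:
  assumes x: "x \<in> FX V Psi"
  shows "\<exists>y\<in>FX V Psi. \<forall>n. (x n, y n) \<in> E n"
proof -
  have "\<forall>m. \<exists>n>m. \<forall>g\<in>V n. card (projected_successors E Psi m n g) = 1"
    using eventually_single_successor by blast
  then have "\<exists>N. \<forall>m. N m > m \<and> (\<forall>g\<in>V (N m). card (projected_successors E Psi m (N m) g) = 1)"
    by (rule choice)
  then obtain N where N: "\<And>m. N m > m"
    "\<And>m. card (projected_successors E Psi m (N m) (x (N m))) = 1"
    using FX_in_V[OF x] by blast
  define y where "y m = the_elem (projected_successors E Psi m (N m) (x (N m)))" for m
  have proj_successor_eq: "proj Psi m (k - m) w = y m" if "N m \<le> k" "(x k, w) \<in> E k" for m k w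
    unfolding y_def using proj_successor_eq_the_elem[OF x N(2)] N(1)[of m] that by simp
  have edge: "(x m, y m) \<in> E m" for m
  proof -
    obtain w where w: "(x (N m), w) \<in> E (N m)"
      using has_successor FX_in_V[OF x] by blast
    then have "(proj Psi m (N m - m) (x (N m)), proj Psi m (N m - m) w) \<in> E m"
      using proj_edge[of "x (N m)" w m "N m - m"] N(1)[of m] by simp
    then show ?thesis
      using proj_FX[OF x, of m "N m"] proj_successor_eq[OF _ w] N(1)[of m] by simp
  qed
  have consistent: "Psi m (y (Suc m)) = y m" for m
  proof -
    define k where "k = max (N m) (N (Suc m))"
    obtain w where w: "(x k, w) \<in> E k"
      using has_successor FX_in_V[OF x] by blast
    have "y m = proj Psi m (k - m) w"
      using proj_successor_eq[OF _ w, of m] unfolding k_def by simp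
    also have "k - m = Suc (k - Suc m)"
      using N(1)[of m] unfolding k_def by linarith
    also have "proj Psi m (Suc (k - Suc m)) w = Psi m (proj Psi (Suc m) (k - Suc m) w)"
      by (rule proj_Suc_left)
    also have "proj Psi (Suc m) (k - Suc m) w = y (Suc m)"
      using proj_successor_eq[OF _ w] unfolding k_def by simp
    finally show ?thesis
      by (rule sym)
  qed
  have "y m \<in> V m" for m
    using edge[of m] E_subset by blast
  then have "y \<in> FX V Psi"
    using consistent unfolding FX_def by simp
  with edge show ?thesis by blast
qed

lemma HX_unique:
  assumes "x \<in> FX V Psi"
    and "y \<in> FX V Psi" "\<forall>n. (x n, y n) \<in> E n" and "y' \<in> FX V Psi" "\<forall>n. (x n, y' n) \<in> E n"
  shows "y = y'"
proof
  fix m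
  obtain n where "n > m" and "card (projected_successors E Psi m n (x n)) = 1"
    using eventually_single_successor FX_in_V[OF assms(1)] by blast
  then show "y m = y' m"
    using assms(2-5) by (intro coord_eq_if_single_projected_successor[of E Psi m n "x n"]) auto
qed

lemma HX_in_FX: "x \<in> FX V Psi \<Longrightarrow> HX V E Psi x \<in> FX V Psi"
  and HX_edge: "x \<in> FX V Psi \<Longrightarrow> (x n, HX V E Psi x n) \<in> E n"
proof -
  assume x: "x \<in> FX V Psi"
  have "\<exists>!y. y \<in> FX V Psi \<and> (\<forall>n. (x n, y n) \<in> E n)"
    using HX_exists[OF x] HX_unique[OF x] by blast
  from theI'[OF this] show "HX V E Psi x \<in> FX V Psi" "(x n, HX V E Psi x n) \<in> E n"
    unfolding HX_def by blast+
qed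

lemma HX_coord_determined:
  "\<exists>n>m. \<forall>x\<in>FX V Psi. \<forall>x'\<in>FX V Psi. x n = x' n \<longrightarrow> HX V E Psi x m = HX V E Psi x' m"
proof -
  obtain n where "n > m" and single: "\<forall>g\<in>V n. card (projected_successors E Psi m n g) = 1"
    using eventually_single_successor by blast
  moreover have "HX V E Psi x m = HX V E Psi x' m"
    if "x \<in> FX V Psi" "x' \<in> FX V Psi" "x n = x' n" for x x'
  proof (rule coord_eq_if_single_projected_successor)
    show "card (projected_successors E Psi m n (x n)) = 1"
      using single FX_in_V[OF that(1)] by blast
    show "(x n, HX V E Psi x' n) \<in> E n"
      using HX_edge[OF that(2)] that(3) by simp
  qed (use HX_in_FX HX_edge that(1,2) \<open>n > m\<close> in auto)
  ultimately show ?thesis by blast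
qed

end

locale Fsystem_Gamma = Fsystem +
  assumes phiU_pos: "v \<in> V n \<Longrightarrow> phiU n v > 0"
    and Condition_Gamma: "Condition_Gamma E Psi phiU"
begin

definition s_seq where
  "s_seq x = (\<lambda>n. s_n phiU n (x n) (HX V E Psi x n))"

lemma summable_Gamma: "summable (Gamma E Psi phiU)"
  using Condition_Gamma unfolding Condition_Gamma_def by blast

lemma s_seq_increment_le_Gamma:
  assumes x: "x \<in> FX V Psi"
  shows "\<bar>s_seq x (Suc n) - s_seq x n\<bar> \<le> Gamma E Psi phiU n"
    and "\<bar>inverse (s_seq x (Suc n)) - inverse (s_seq x n)\<bar> \<le> Gamma E Psi phiU n"
proof -
  let ?y = "HX V E Psi x"
  have "\<bar>s_n phiU n (x n) (?y n) - s_n phiU (Suc n) (x (Suc n)) (?y (Suc n))\<bar> \<le> Gamma E Psi phiU n"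
    and "\<bar>s_n phiU n (?y n) (x n) - s_n phiU (Suc n) (?y (Suc n)) (x (Suc n))\<bar> \<le> Gamma E Psi phiU n"
    using s_n_diff_le_Gamma[OF HX_edge[OF x] HX_edge[OF x] FX_Psi[OF x] FX_Psi[OF HX_in_FX[OF x]]]
    by blast+
  moreover have "inverse (s_n phiU k u v) = s_n phiU k v u" for k u v
    unfolding s_n_def by simp
  ultimately show "\<bar>s_seq x (Suc n) - s_seq x n\<bar> \<le> Gamma E Psi phiU n"
    and "\<bar>inverse (s_seq x (Suc n)) - inverse (s_seq x n)\<bar> \<le> Gamma E Psi phiU n"
    unfolding s_seq_def by (simp_all add: abs_minus_commute)
qed

lemma
  assumes "x \<in> FX V Psi"
  shows s_seq_LIMSEQ: "s_seq x \<longlonglongrightarrow> lim (s_seq x)"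
    and s_seq_dist_lim: "\<bar>s_seq x n - lim (s_seq x)\<bar> \<le> (\<Sum>k. Gamma E Psi phiU (k + n))"
  using summable_increments_LIMSEQ[where a = "s_seq x", OF summable_Gamma s_seq_increment_le_Gamma(1)[OF assms]]
  by blast+

lemma s_seq_pos:
  assumes x: "x \<in> FX V Psi"
  shows "s_seq x n > 0"
  using phiU_pos[OF FX_in_V[OF x]] phiU_pos[OF FX_in_V[OF HX_in_FX[OF x]]]
  unfolding s_seq_def s_n_def by simp

lemma lim_s_seq_pos:
  assumes x: "x \<in> FX V Psi"
  shows "lim (s_seq x) > 0"
proof (rule pos_limit_if_inverse_convergent[OF s_seq_pos[OF x] s_seq_LIMSEQ[OF x]])
  show "convergent (\<lambda>n. inverse (s_seq x n))"
    using summable_increments_LIMSEQ(1)[where a = "\<lambda>n. inverse (s_seq x n)",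
        OF summable_Gamma s_seq_increment_le_Gamma(2)[OF x]]
    by (auto simp: convergent_def)
qed

lemma lim_s_seq_eq_ratio:
  assumes x: "x \<in> FX V Psi" and "phiU_lim phiU x \<noteq> 0"
  shows "lim (s_seq x) = phiU_lim phiU (HX V E Psi x) / phiU_lim phiU x"
proof -
  have "s_seq x = (\<lambda>n. phiU n (HX V E Psi x n) / phiU n (x n))"
    unfolding s_seq_def s_n_def ..
  also have "\<dots> \<longlonglongrightarrow> phiU_lim phiU (HX V E Psi x) / phiU_lim phiU x"
    by (rule tendsto_divide[OF phiU_LIMSEQ[OF HX_in_FX[OF x]] phiU_LIMSEQ[OF x] assms(2)])
  finally show ?thesis
    by (rule limI)
qed

lemma continuous_map_s_seq: "continuous_map (FX_top V Psi) euclideanreal (\<lambda>x. s_seq x m)"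
proof -
  obtain n where "n > m"
    and HX_eq: "\<forall>x\<in>FX V Psi. \<forall>x'\<in>FX V Psi. x n = x' n \<longrightarrow> HX V E Psi x m = HX V E Psi x' m"
    using HX_coord_determined by blast
  show ?thesis
  proof (rule continuous_map_FX_top_if_coord_determined[where n = n])
    show "(\<lambda>x. s_seq x m) ` FX V Psi \<subseteq> topspace euclideanreal"
      by simp
  next
    fix x x' assume x: "x \<in> FX V Psi" and x': "x' \<in> FX V Psi" and "x n = x' n"
    have "x m = proj Psi m (n - m) (x n)"
      using proj_FX[OF x, of m n] \<open>n > m\<close> by simp
    also have "\<dots> = x' m"
      using proj_FX[OF x', of m n] \<open>n > m\<close> \<open>x n = x' n\<close> by simp
    finally have "x m = x' m" .
    moreover have "HX V E Psi x m = HX V E Psi x' m"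
      using HX_eq x x' \<open>x n = x' n\<close> by blast
    ultimately show "s_seq x m = s_seq x' m"
      unfolding s_seq_def by simp
  qed
qed

lemma continuous_map_lim_s_seq: "continuous_map (FX_top V Psi) euclideanreal (\<lambda>x. lim (s_seq x))"
proof -
  have "continuous_map (FX_top V Psi) Met_TC.mtopology (\<lambda>x. lim (s_seq x))"
  proof (rule Met_TC.continuous_map_uniform_limit[where F = sequentially and f = "\<lambda>m x. s_seq x m"])
    show "\<forall>\<^sub>F m in sequentially. continuous_map (FX_top V Psi) Met_TC.mtopology (\<lambda>x. s_seq x m)"
      using continuous_map_s_seq by simp
  next
    fix \<epsilon> :: real
    assume "\<epsilon> > 0"
    then obtain N where N: "\<forall>n\<ge>N. norm (\<Sum>k. Gamma E Psi phiU (k + n)) < \<epsilon>"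
      using suminf_exist_split[OF _ summable_Gamma] by blast
    have "dist (s_seq x n) (lim (s_seq x)) < \<epsilon>" if "n \<ge> N" and x: "x \<in> FX V Psi" for n x
    proof -
      have "\<bar>s_seq x n - lim (s_seq x)\<bar> \<le> (\<Sum>k. Gamma E Psi phiU (k + n))"
        by (rule s_seq_dist_lim[OF x])
      also have "\<dots> < \<epsilon>"
        using N that(1) by fastforce
      finally show ?thesis
        by (simp add: dist_real_def)
    qed
    then show "\<forall>\<^sub>F n in sequentially. \<forall>x\<in>topspace (FX_top V Psi).
        lim (s_seq x) \<in> UNIV \<and> dist (s_seq x n) (lim (s_seq x)) < \<epsilon>"
      unfolding eventually_sequentially topspace_FX_top by blast
  qed simp
  then show ?thesis
    by simp
qed

end

theorem lemma5p3:
  fixes V :: "nat \<Rightarrow> 'v set" and E :: "nat \<Rightarrow> ('v \<times> 'v) set"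
    and Psi :: "nat \<Rightarrow> 'v \<Rightarrow> 'v" and phiL phiU :: "nat \<Rightarrow> 'v \<Rightarrow> real"
    and s :: "(nat \<Rightarrow> 'v) \<Rightarrow> real"
  assumes "F_system V E Psi phiL phiU"
    and "\<forall>n. \<forall>v\<in>V n. phiU n v > 0"
    and "Condition_Gamma E Psi phiU"
    and "s = (\<lambda>x. lim (\<lambda>n. s_n phiU n (x n) (HX V E Psi x n)))"
  shows "(\<forall>x\<in>FX V Psi. (\<lambda>n. s_n phiU n (x n) (HX V E Psi x n)) \<longlonglongrightarrow> s x)
    \<and> continuous_map (FX_top V Psi) euclideanreal s
    \<and> (\<forall>x\<in>FX V Psi. s x > 0)
    \<and> (\<forall>x\<in>FX V Psi. phiU_lim phiU x \<noteq> 0 \<longrightarrow>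
          s x = phiU_lim phiU (HX V E Psi x) / phiU_lim phiU x)"
proof -
  interpret Fsystem_Gamma V E Psi phiL phiU
    by unfold_locales (use assms(1-3) in auto)
  have s_eq: "s = (\<lambda>x. lim (s_seq x))"
    unfolding assms(4) s_seq_def ..
  show ?thesis
    unfolding s_eq s_seq_def[symmetric]
    using s_seq_LIMSEQ continuous_map_lim_s_seq lim_s_seq_pos lim_s_seq_eq_ratio by blast
qed

end
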